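(* Let $n\ge 2$ be an integer, $k,c_b>0$, $\rho_0>0$, and let $\lambda_{1,0}\le\cdots\le\lambda_{n,0}$ be real numbers. Consider the system $$\lambda_i'=-\lambda_i^2+\frac{k}{n}(\rho-c_b)\ (i=1,\dots,n),\qquad \rho'=-\rho\lambda,\quad \lambda=\sum_{i=1}^n\lambda_i,\qquad \rho(0)=\rho_0,\ \lambda_i(0)=\lambda_{i,0},$$ and suppose its maximal interval of existence is $[0,t_B)$ with $0<t_B<\infty$. Then $\lim_{t\to t_B^-}\int_0^t\rho(s)\,ds=\infty$.
   Context: Solutions are real-valued and continuously differentiable on $[0,t_B)$. *)

theory Defs
  imports "HOL-Analysis.Analysis"
begin

text \<open>A (real-valued, differentiable) solution of the system on [0,T):
  lambda_i' = -lambda_i^2 + (k/n)(rho - c_b)  (i = 0..n-1, i.e. indices 1..n shifted),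
  rho' = -rho * (sum_i lambda_i),  rho(0) = rho0, lambda_i(0) = l0 i.
  Derivatives are one-sided at t = 0 (within [0,T)).\<close>
definition is_solution ::
  "nat \<Rightarrow> real \<Rightarrow> real \<Rightarrow> real \<Rightarrow> (nat \<Rightarrow> real) \<Rightarrow> real
    \<Rightarrow> (nat \<Rightarrow> real \<Rightarrow> real) \<Rightarrow> (real \<Rightarrow> real) \<Rightarrow> bool" where
  "is_solution n k cb rho0 l0 T lam rho \<longleftrightarrow>
     0 < T \<and>
     rho 0 = rho0 \<and> (\<forall>i<n. lam i 0 = l0 i) \<and>
     (\<forall>i<n. \<forall>t\<in>{0..<T}.
        (lam i has_real_derivative (- ((lam i t) ^ 2) + k / real n * (rho t - cb)))
          (at t within {0..<T})) \<and>
     (\<forall>t\<in>{0..<T}.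
        (rho has_real_derivative (- rho t * (\<Sum>i<n. lam i t))) (at t within {0..<T}))"

end

(* Suppose t_B is finite but int_0^t rho stays below some Z on [0, t_B). Since
   lambda_i' <= (k/n) rho, each lambda_i stays below l_i + (k/n) Z, so Lambda_i = int_0^t lambda_i is
   bounded above, and rho = rho0 exp (- sum_i Lambda_i). For x_i = exp Lambda_i one computes
   (lambda_i x_i)' = (k/n) (rho - c_b) x_i >= - C, hence x_i' = lambda_i x_i >= - B and
   x_i(s) <= x_i(t) + B (t - s) for s <= t. As rho >= c / x_i, integrating gives
   Z >= int_0^t rho >= (c / B) log ((x_i(t) + B t) / x_i(t)), which keeps x_i away from 0.
   So lambda_i = (lambda_i x_i) / x_i and rho are bounded; the solution then extends continuously
   to t_B and, by Picard-Lindeloef, beyond it, contradicting maximality. Finally rho > 0 makes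
   int_0^t rho increasing, so being unbounded it tends to infinity. *)

theory Submission
  imports Defs "HOL-Probability.Discrete_Topology"
begin

section \<open>Calculus on half-open intervals\<close>

lemma nondecreasing_of_deriv_nonneg:
  fixes f f' :: "real \<Rightarrow> real"
  assumes "a \<le> b" and "{a..b} \<subseteq> S"
    and "\<And>x. x \<in> {a..b} \<Longrightarrow> (f has_real_derivative f' x) (at x within S)"
    and "\<And>x. x \<in> {a..b} \<Longrightarrow> 0 \<le> f' x"
  shows "f a \<le> f b"
proof -
  obtain x where "x \<in> {a..b}" "f b - f a = f' x * (b - a)"
    using mvt_very_simple[OF assms(1), of f "\<lambda>x h. f' x * h"] assms(2,3)
    by (force simp: has_field_derivative_def intro: has_derivative_subset)
  then show ?thesis using assms(1,4) by (metis diff_ge_0_iff_ge mult_nonneg_nonneg)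
qed

lemma integral_has_real_derivative_atLeastLessThan:
  fixes g :: "real \<Rightarrow> real"
  assumes "continuous_on {a..<b} g" and "t \<in> {a..<b}"
  shows "((\<lambda>u. integral {a..u} g) has_real_derivative g t) (at t within {a..<b})"
proof -
  define c where "c = (t + b) / 2"
  have "t < c" "c < b" using assms(2) by (auto simp: c_def)
  have "((\<lambda>u. integral {a..u} g) has_real_derivative g t) (at t within {a..c})"
    using \<open>c < b\<close> assms
    by (intro integral_has_real_derivative continuous_on_subset[OF assms(1)]) (auto simp: c_def)
  moreover have "at t within {a..c} = at t within {a..<b}"
    by (rule at_within_nhd[where S="{..<c}"]) (use \<open>t < c\<close> \<open>c < b\<close> in auto)
  ultimately show ?thesis by simp
qed

lemma continuous_extension_of_bounded_derivative:
  fixes f f' :: "real \<Rightarrow> real"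
  assumes "a < b"
    and "\<And>t. t \<in> {a..<b} \<Longrightarrow> (f has_real_derivative f' t) (at t within {a..<b})"
    and "\<And>t. t \<in> {a..<b} \<Longrightarrow> \<bar>f' t\<bar> \<le> D"
  shows "\<exists>g. continuous_on {a..b} g \<and> (\<forall>t\<in>{a..<b}. g t = f t)"
proof -
  have "0 \<le> D"
    using assms(1) assms(3)[of a] by force
  have "D-lipschitz_on {a..<b} f"
  proof (rule bounded_derivative_imp_lipschitz)
    show "(f has_derivative (\<lambda>h. f' t * h)) (at t within {a..<b})" if "t \<in> {a..<b}" for t
      using assms(2)[OF that] by (simp add: has_field_derivative_def)
    show "onorm (\<lambda>h. f' t * h) \<le> D" if "t \<in> {a..<b}" for t
      using assms(3)[OF that] by (intro onorm_le) (simp add: abs_mult mult_right_mono)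
  qed (use \<open>0 \<le> D\<close> in auto)
  then obtain g where "D-lipschitz_on {a..b} g" "\<forall>t\<in>{a..<b}. g t = f t"
    using lipschitz_extend_closure assms(1) by fastforce
  then show ?thesis using lipschitz_on_continuous_on by blast
qed

lemma fundamental_theorem_of_calculus_atLeastLessThan:
  fixes f G :: "real \<Rightarrow> real"
  assumes "continuous_on {a..b} f" and "continuous_on {a..b} G"
    and "\<And>t. t \<in> {a..<b} \<Longrightarrow> (f has_real_derivative G t) (at t within {a..<b})"
    and "t \<in> {a..b}"
  shows "f t = f a + integral {a..t} G"
proof -
  have "(G has_integral (f t - f a)) {a..t}"
  proof (rule fundamental_theorem_of_calculus_interior)
    show "continuous_on {a..t} f" using assms(4) by (intro continuous_on_subset[OF assms(1)]) auto
    fix x assume x: "x \<in> {a<..<t}"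
    then have "at x within {a..<b} = at x"
      using assms(4) by (intro at_within_interior) (auto simp: interior_atLeastLessThan)
    then show "(f has_vector_derivative G x) (at x)"
      using assms(3)[of x] x assms(4) by (simp add: has_real_derivative_iff_has_vector_derivative)
  qed (use assms(4) in auto)
  then show ?thesis by (simp add: integral_unique)
qed

lemma has_real_derivative_glue:
  fixes f g G :: "real \<Rightarrow> real"
  assumes "a \<le> b" and "b \<le> c"
    and "continuous_on {a..b} f" and "continuous_on {a..c} G"
    and "\<And>t. t \<in> {a..<b} \<Longrightarrow> (f has_real_derivative G t) (at t within {a..<b})"
    and "\<And>t. t \<in> {b..c} \<Longrightarrow> g t = f b + integral {b..t} G"
    and "t \<in> {a..<c}"
  shows "((\<lambda>t. if t < b then f t else g t) has_real_derivative G t) (at t within {a..<c})"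
proof -
  have G_int: "G integrable_on {a..c}"
    using assms(4) by (rule integrable_continuous_interval)
  have integral_form: "(if s < b then f s else g s) = f a + integral {a..s} G" if "s \<in> {a..c}" for s
  proof (cases "s < b")
    case True
    have "f s = f a + integral {a..s} G"
      by (rule fundamental_theorem_of_calculus_atLeastLessThan[OF assms(3) continuous_on_subset[OF assms(4)] assms(5)])
        (use True that assms(2) in auto)
    then show ?thesis using True by simp
  next
    case False
    have "f b = f a + integral {a..b} G"
      by (rule fundamental_theorem_of_calculus_atLeastLessThan[OF assms(3) continuous_on_subset[OF assms(4)] assms(5)])
        (use assms(1,2) in auto)
    then have "g s = f a + integral {a..b} G + integral {b..s} G"
      using assms(6) False that by simp
    also have "\<dots> = f a + integral {a..s} G"
      using False that assms(1) integrable_on_subinterval[OF G_int, of a s]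
      by (simp add: Henstock_Kurzweil_Integration.integral_combine)
    finally show ?thesis using False by simp
  qed
  have "((\<lambda>s. f a + integral {a..s} G) has_real_derivative G t) (at t within {a..c})"
    using assms(4,7) by (auto intro!: derivative_eq_intros integral_has_real_derivative)
  then have "((\<lambda>s. f a + integral {a..s} G) has_real_derivative G t) (at t within {a..<c})"
    by (rule DERIV_subset) auto
  then show ?thesis
    by (rule has_field_derivative_transform_within[OF _ zero_less_one]) (use assms(7) integral_form in auto)
qed

lemma continuous_on_glue:
  fixes f g :: "real \<Rightarrow> 'a::topological_space"
  assumes "a \<le> b" "b \<le> c"
    and "continuous_on {a..b} f" and "continuous_on {b..c} g" and "f b = g b"
  shows "continuous_on {a..c} (\<lambda>t. if t < b then f t else g t)"
proof -
  have "continuous_on ({a..b} \<union> {b..c}) (\<lambda>t. if t < b then f t else g t)"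
  proof (rule continuous_on_closed_Un)
    show "continuous_on {a..b} (\<lambda>t. if t < b then f t else g t)"
      using assms(3) by (rule continuous_on_eq) (use assms(5) in auto)
    show "continuous_on {b..c} (\<lambda>t. if t < b then f t else g t)"
      using assms(4) by (rule continuous_on_eq) auto
  qed auto
  also have "{a..b} \<union> {b..c} = {a..c}"
    using assms(1,2) by auto
  finally show ?thesis .
qed

section \<open>Local existence for Lipschitz vector fields\<close>

locale picard_setting =
  fixes F :: "'a::banach \<Rightarrow> 'a" and x0 :: 'a and R K L \<delta> t0 :: real
  assumes R_pos: "0 < R" and \<delta>_pos: "0 < \<delta>"
    and F_bounded: "\<And>x. x \<in> cball x0 R \<Longrightarrow> norm (F x) \<le> K"
    and F_lipschitz: "L-lipschitz_on (cball x0 R) F"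
    and \<delta>_K: "\<delta> * K \<le> R" and \<delta>_L: "\<delta> * L < 1"
begin

definition clamp :: "real \<Rightarrow> real" where
  "clamp t = min (t0 + \<delta>) (max t0 t)"

text \<open>Clamping the upper limit makes \<open>picard_op x\<close> a bounded continuous function on all of
  \<open>\<real>\<close>; on \<open>[t0, t0 + \<delta>]\<close> it is the usual Picard iteration.\<close>

definition picard_op :: "(real \<Rightarrow>\<^sub>C 'a) \<Rightarrow> real \<Rightarrow> 'a" where
  "picard_op x t = x0 + integral {t0..clamp t} (\<lambda>s. F (x s))"

definition paths_in_ball :: "(real \<Rightarrow>\<^sub>C 'a) set" where
  "paths_in_ball = {x. \<forall>t. apply_bcontfun x t \<in> cball x0 R}"

lemma clamp_in_interval: "clamp t \<in> {t0..t0 + \<delta>}"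
  using \<delta>_pos by (auto simp: clamp_def)

lemma L_nonneg: "0 \<le> L"
  using F_lipschitz by (rule lipschitz_on_nonneg)

lemma K_nonneg: "0 \<le> K"
  using F_bounded[of x0] R_pos by (auto intro: order_trans[OF norm_ge_zero])

lemma F_path_continuous: "x \<in> paths_in_ball \<Longrightarrow> continuous_on A (\<lambda>s. F (x s))"
  by (rule continuous_on_compose2[OF lipschitz_on_continuous_on[OF F_lipschitz]])
    (auto simp: paths_in_ball_def)

lemma F_path_integrable: "x \<in> paths_in_ball \<Longrightarrow> (\<lambda>s. F (x s)) integrable_on {a..b}"
  by (rule integrable_continuous_interval[OF F_path_continuous])

lemma norm_integral_F_path:
  assumes "x \<in> paths_in_ball"
  shows "norm (integral {t0..clamp t} (\<lambda>s. F (x s))) \<le> R"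
proof -
  have "norm (integral {t0..clamp t} (\<lambda>s. F (x s))) \<le> K * Henstock_Kurzweil_Integration.content {t0..clamp t}"
    by (rule has_integral_bound_real[OF K_nonneg finite.emptyI])
      (use F_path_integrable[OF assms] F_bounded assms in \<open>auto simp: paths_in_ball_def\<close>)
  also have "\<dots> \<le> K * \<delta>"
    using clamp_in_interval[of t] K_nonneg by (intro mult_left_mono) auto
  finally show ?thesis using \<delta>_K by (simp add: mult.commute)
qed

lemma picard_op_bcontfun:
  assumes "x \<in> paths_in_ball"
  shows "picard_op x \<in> bcontfun"
proof (rule bcontfun_normI)
  have "continuous_on {t0..t0 + \<delta>} (\<lambda>u. integral {t0..u} (\<lambda>s. F (x s)))"
    by (rule indefinite_integral_continuous_1[OF F_path_integrable[OF assms]])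
  moreover have "continuous_on UNIV clamp"
    unfolding clamp_def by (intro continuous_intros)
  ultimately have "continuous_on UNIV (\<lambda>t. integral {t0..clamp t} (\<lambda>s. F (x s)))"
    by (rule continuous_on_compose2) (use clamp_in_interval in auto)
  then show "continuous_on UNIV (picard_op x)"
    unfolding picard_op_def by (intro continuous_on_add continuous_on_const)
  show "norm (picard_op x t) \<le> norm x0 + R" for t
    unfolding picard_op_def
    using norm_integral_F_path[OF assms, of t] by (intro norm_triangle_le) simp
qed

lemma picard_op_maps_to_ball:
  assumes "x \<in> paths_in_ball"
  shows "Bcontfun (picard_op x) \<in> paths_in_ball"
proof -
  have "dist x0 (picard_op x t) \<le> R" for t
    using norm_integral_F_path[OF assms] by (simp add: picard_op_def dist_norm)
  then show ?thesis
    using picard_op_bcontfun[OF assms] by (simp add: paths_in_ball_def Bcontfun_inverse)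
qed

lemma picard_op_contraction:
  assumes "x \<in> paths_in_ball" and "y \<in> paths_in_ball"
  shows "dist (picard_op x t) (picard_op y t) \<le> (\<delta> * L) * dist x y"
proof -
  have "dist (picard_op x t) (picard_op y t)
      = norm (integral {t0..clamp t} (\<lambda>s. F (x s) - F (y s)))"
    using assms by (simp add: picard_op_def dist_norm integral_diff F_path_integrable)
  also have "\<dots> \<le> (L * dist x y) * Henstock_Kurzweil_Integration.content {t0..clamp t}"
  proof (rule has_integral_bound_real[OF _ finite.emptyI])
    show "0 \<le> L * dist x y" using L_nonneg by simp
    show "((\<lambda>s. F (x s) - F (y s)) has_integral integral {t0..clamp t} (\<lambda>s. F (x s) - F (y s)))
        {t0..clamp t}"
      by (intro integrable_integral integrable_diff F_path_integrable assms)
    fix s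
    have "norm (F (x s) - F (y s)) \<le> L * dist (x s) (y s)"
      using lipschitz_onD[OF F_lipschitz] assms by (auto simp: paths_in_ball_def dist_norm)
    also have "\<dots> \<le> L * dist x y"
      by (intro mult_left_mono dist_bounded L_nonneg)
    finally show "norm (F (x s) - F (y s)) \<le> L * dist x y" .
  qed
  also have "\<dots> \<le> (L * dist x y) * \<delta>"
    using clamp_in_interval[of t] L_nonneg by (intro mult_left_mono) auto
  finally show ?thesis by (simp add: algebra_simps)
qed

lemma picard_fixed_point:
  obtains X where "continuous_on UNIV X" and "\<And>t. X t \<in> cball x0 R"
    and "\<And>t. t \<in> {t0..t0 + \<delta>} \<Longrightarrow> X t = x0 + integral {t0..t} (\<lambda>s. F (X s))"
proof -
  have "closed paths_in_ball"
  proof -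
    have "paths_in_ball = PiC UNIV (\<lambda>_. cball x0 R)"
      by (auto simp: paths_in_ball_def mem_PiC_iff Pi_iff)
    then show ?thesis by (auto intro!: closed_PiC)
  qed
  moreover have "const_bcontfun x0 \<in> paths_in_ball"
    using R_pos by (simp add: paths_in_ball_def)
  moreover have "dist (Bcontfun (picard_op x)) (Bcontfun (picard_op y)) \<le> (\<delta> * L) * dist x y"
    if "x \<in> paths_in_ball" "y \<in> paths_in_ball" for x y
    using picard_op_contraction[OF that] picard_op_bcontfun that
    by (intro dist_bound) (simp add: Bcontfun_inverse)
  ultimately have "\<exists>!X\<in>paths_in_ball. Bcontfun (picard_op X) = X"
    using \<delta>_pos L_nonneg \<delta>_L picard_op_maps_to_ball
    by (intro Banach_fix) (auto simp: complete_eq_closed)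
  then obtain X where X_ball: "X \<in> paths_in_ball" and "Bcontfun (picard_op X) = X"
    by blast
  then have X_eq: "apply_bcontfun X t = picard_op X t" for t
    by (metis Bcontfun_inverse picard_op_bcontfun)
  show ?thesis
  proof (rule that)
    show "apply_bcontfun X t \<in> cball x0 R" for t
      using X_ball by (simp add: paths_in_ball_def)
    show "apply_bcontfun X t = x0 + integral {t0..t} (\<lambda>s. F (apply_bcontfun X s))"
      if "t \<in> {t0..t0 + \<delta>}" for t
      using that X_eq[of t] by (simp add: picard_op_def clamp_def)
  qed simp
qed

end

lemma picard_lindeloef_local:
  fixes F :: "'a::banach \<Rightarrow> 'a" and t0 :: real
  assumes "0 < R" and "L-lipschitz_on (cball x0 R) F"
  obtains \<delta> X where "0 < \<delta>" and "continuous_on UNIV X" and "\<And>t. X t \<in> cball x0 R"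
    and "\<And>t. t \<in> {t0..t0 + \<delta>} \<Longrightarrow> X t = x0 + integral {t0..t} (\<lambda>s. F (X s))"
proof -
  define K where "K = norm (F x0) + L * R"
  define \<delta> where "\<delta> = R / (K + R * (L + 1))"
  have L: "0 \<le> L" using assms(2) by (rule lipschitz_on_nonneg)
  have "norm (F x) \<le> K" if "x \<in> cball x0 R" for x
  proof -
    have "norm (F x) \<le> norm (F x0) + dist (F x) (F x0)"
      by (simp add: dist_norm norm_triangle_sub)
    also have "dist (F x) (F x0) \<le> L * dist x x0"
      using lipschitz_onD[OF assms(2)] that assms(1) by (simp add: dist_commute)
    also have "\<dots> \<le> L * R" using that L by (intro mult_left_mono) (auto simp: dist_commute)
    finally show ?thesis by (simp add: K_def)
  qed
  moreover have "0 \<le> K" using L assms(1) by (simp add: K_def)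
  then have "0 < K + R * (L + 1)" using assms(1) L by (simp add: add_nonneg_pos)
  then have "0 < \<delta>" "\<delta> * K \<le> R" "\<delta> * L < 1"
    using assms(1) L \<open>0 \<le> K\<close> by (auto simp: \<delta>_def field_simps)
  ultimately interpret picard_setting F x0 R K L \<delta> t0
    using assms by unfold_locales
  obtain X where "continuous_on UNIV X" "\<And>t. X t \<in> cball x0 R"
    "\<And>t. t \<in> {t0..t0 + \<delta>} \<Longrightarrow> X t = x0 + integral {t0..t} (\<lambda>s. F (X s))"
    using picard_fixed_point by blast
  with \<open>0 < \<delta>\<close> show ?thesis by (rule that)
qed

section \<open>State vectors as bounded sequences\<close>

text \<open>The state space \<open>\<real>\<^sup>n\<^sup>+\<^sup>1\<close> has a dimension that is not a type, so
  vectors are embedded, with finite support, into the Banach space of bounded functions on the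
  discrete space of indices.\<close>

instance bcontfun :: (metric_space, banach) banach ..

lemma bounded_linear_apply_bcontfun:
  "bounded_linear (\<lambda>f :: 'a::topological_space \<Rightarrow>\<^sub>C 'b::real_normed_vector. apply_bcontfun f x)"
  by (rule bounded_linear_intro[where K = 1]) (auto simp: norm_bounded)

lemma lipschitz_on_apply_bcontfun: "1-lipschitz_on X (\<lambda>f. apply_bcontfun f x)"
  by (rule lipschitz_onI) (auto simp: dist_bounded)

lemma continuous_on_discrete_domain: "continuous_on A (f :: 'a discrete \<Rightarrow> 'b::topological_space)"
  unfolding continuous_on_open_invariant using open_discrete by blast

definition coord :: "(nat discrete \<Rightarrow>\<^sub>C real) \<Rightarrow> nat \<Rightarrow> real" where
  "coord x i = apply_bcontfun x (discrete i)"

definition of_coords :: "(nat \<Rightarrow> real) \<Rightarrow> nat discrete \<Rightarrow>\<^sub>C real" where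
  "of_coords v = Bcontfun (\<lambda>d. v (of_discrete d))"

lemma finite_support_bcontfun:
  fixes v :: "nat \<Rightarrow> real"
  assumes "\<And>j. N < j \<Longrightarrow> v j = 0"
  shows "(\<lambda>d. v (of_discrete d)) \<in> bcontfun"
proof (rule bcontfun_normI)
  show "norm (v (of_discrete d)) \<le> (\<Sum>i\<le>N. norm (v i))" for d
    using assms[of "of_discrete d"]
    by (cases "of_discrete d \<le> N") (auto intro: member_le_sum sum_nonneg)
qed (rule continuous_on_discrete_domain)

lemma apply_of_coords:
  assumes "\<And>j. N < j \<Longrightarrow> v j = 0"
  shows "apply_bcontfun (of_coords v) d = v (of_discrete d)"
  using finite_support_bcontfun[of N v] assms by (simp add: of_coords_def Bcontfun_inverse)

lemma coord_of_coords:
  assumes "\<And>j. N < j \<Longrightarrow> v j = 0"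
  shows "coord (of_coords v) = v"
  by (rule ext) (simp add: coord_def apply_of_coords[OF assms] discrete_inverse)

lemma bounded_linear_coord: "bounded_linear (\<lambda>x. coord x i)"
  unfolding coord_def by (rule bounded_linear_apply_bcontfun)

lemma lipschitz_on_coord: "1-lipschitz_on X (\<lambda>x. coord x i)"
  unfolding coord_def by (rule lipschitz_on_apply_bcontfun)

lemma norm_coord_le: "norm (coord x i) \<le> norm x"
  unfolding coord_def by (rule norm_bounded)

lemma lipschitz_on_mult_bounded:
  fixes f g :: "'a::metric_space \<Rightarrow> 'b::real_normed_algebra"
  assumes "L-lipschitz_on X f" and "M-lipschitz_on X g"
    and "\<And>x. x \<in> X \<Longrightarrow> norm (f x) \<le> A" and "\<And>x. x \<in> X \<Longrightarrow> norm (g x) \<le> B"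
    and "0 \<le> A" and "0 \<le> B"
  shows "(A * M + B * L)-lipschitz_on X (\<lambda>x. f x * g x)"
proof (rule lipschitz_onI)
  fix x y assume xy: "x \<in> X" "y \<in> X"
  have "dist (f x * g x) (f y * g y) = norm (f x * (g x - g y) + (f x - f y) * g y)"
    by (simp add: dist_norm algebra_simps)
  also have "\<dots> \<le> norm (f x) * norm (g x - g y) + norm (f x - f y) * norm (g y)"
    by (intro norm_triangle_le add_mono norm_mult_ineq)
  also have "\<dots> \<le> A * (M * dist x y) + (L * dist x y) * B"
    using xy assms lipschitz_onD[OF assms(1)] lipschitz_onD[OF assms(2)]
    by (intro add_mono mult_mono) (auto simp: dist_norm lipschitz_on_nonneg)
  finally show "dist (f x * g x) (f y * g y) \<le> (A * M + B * L) * dist x y"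
    by (simp add: algebra_simps)
qed (use assms(5,6) lipschitz_on_nonneg[OF assms(1)] lipschitz_on_nonneg[OF assms(2)] in simp)

lemma lipschitz_on_sum:
  fixes f :: "'i \<Rightarrow> 'a::metric_space \<Rightarrow> 'b::real_normed_vector"
  assumes "\<And>i. i \<in> I \<Longrightarrow> (L i)-lipschitz_on X (f i)"
  shows "(\<Sum>i\<in>I. L i)-lipschitz_on X (\<lambda>x. \<Sum>i\<in>I. f i x)"
  using assms
proof (induction I rule: infinite_finite_induct)
  case (insert i I)
  then have "(L i + (\<Sum>i\<in>I. L i))-lipschitz_on X (\<lambda>x. f i x + (\<Sum>i\<in>I. f i x))"
    by (intro lipschitz_on_add) auto
  with insert.hyps show ?case by simp
qed (auto intro: lipschitz_on_constant)

lemma lipschitz_on_of_coords: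
  fixes f :: "'a::metric_space \<Rightarrow> nat \<Rightarrow> real"
  assumes "\<And>x j. N < j \<Longrightarrow> f x j = 0"
    and "\<And>j. j \<le> N \<Longrightarrow> \<exists>L. L-lipschitz_on X (\<lambda>x. f x j)"
  shows "\<exists>L. L-lipschitz_on X (\<lambda>x. of_coords (f x))"
proof -
  obtain Lj where Lj: "\<And>j. j \<le> N \<Longrightarrow> (Lj j)-lipschitz_on X (\<lambda>x. f x j)"
    using assms(2) by metis
  have Lj_nonneg: "j \<le> N \<Longrightarrow> 0 \<le> Lj j" for j
    using Lj lipschitz_on_nonneg by blast
  define L where "L = (\<Sum>j\<le>N. Lj j)"
  have L_nonneg: "0 \<le> L"
    unfolding L_def using Lj_nonneg by (intro sum_nonneg) auto
  have "L-lipschitz_on X (\<lambda>x. of_coords (f x))"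
  proof (rule lipschitz_onI)
    fix x y assume xy: "x \<in> X" "y \<in> X"
    show "dist (of_coords (f x)) (of_coords (f y)) \<le> L * dist x y"
    proof (rule dist_bound)
      fix d :: "nat discrete"
      define j where "j = of_discrete d"
      have "dist (of_coords (f x) d) (of_coords (f y) d) = dist (f x j) (f y j)"
        by (simp add: j_def apply_of_coords[where N = N] assms(1))
      also have "\<dots> \<le> L * dist x y"
      proof (cases "j \<le> N")
        case True
        have "dist (f x j) (f y j) \<le> Lj j * dist x y"
          using lipschitz_onD[OF Lj[OF True] xy] .
        also have "\<dots> \<le> L * dist x y"
          unfolding L_def using True Lj_nonneg
          by (intro mult_right_mono member_le_sum) auto
        finally show ?thesis .
      qed (use L_nonneg assms(1) in simp)
      finally show "dist (of_coords (f x) d) (of_coords (f y) d) \<le> L * dist x y" .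
    qed
  qed (rule L_nonneg)
  then show ?thesis ..
qed

text \<open>Coordinate \<open>i < n\<close> carries \<open>\<lambda>\<^sub>i\<^sub>+\<^sub>1\<close> and coordinate \<open>n\<close> carries \<open>\<rho>\<close>.\<close>

definition system_field :: "nat \<Rightarrow> real \<Rightarrow> real \<Rightarrow> (nat \<Rightarrow> real) \<Rightarrow> nat \<Rightarrow> real" where
  "system_field n k cb x j =
     (if j < n then - ((x j) ^ 2) + k / real n * (x n - cb)
      else if j = n then - x n * (\<Sum>i<n. x i) else 0)"

lemma system_field_cong:
  "(\<And>i. i \<le> n \<Longrightarrow> x i = x' i) \<Longrightarrow> system_field n k cb x j = system_field n k cb x' j"
  by (simp add: system_field_def)

lemma continuous_on_system_field:
  assumes "\<And>i. i \<le> n \<Longrightarrow> continuous_on S (\<lambda>s. x s i)"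
  shows "continuous_on S (\<lambda>s. system_field n k cb (x s) j)"
proof -
  consider "j < n" | "j = n" | "n < j" by linarith
  then show ?thesis
    by cases (auto simp: system_field_def intro!: continuous_intros assms)
qed

lemma system_field_bound:
  assumes "\<And>i. i \<le> n \<Longrightarrow> \<bar>x i\<bar> \<le> M"
  shows "\<bar>system_field n k cb x j\<bar> \<le> M\<^sup>2 + \<bar>k / real n\<bar> * (M + \<bar>cb\<bar>) + real n * M\<^sup>2"
proof -
  have M: "0 \<le> M" using assms[of 0] by simp
  have x_sq: "(x i)\<^sup>2 \<le> M\<^sup>2" if "i \<le> n" for i
    using power_mono[OF assms[OF that] abs_ge_zero, of 2] by simp
  have "\<bar>\<Sum>i<n. x i\<bar> \<le> (\<Sum>i<n. \<bar>x i\<bar>)"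
    by (rule sum_abs)
  also have "\<dots> \<le> (\<Sum>i<n. M)"
    using assms by (intro sum_mono) auto
  finally have "\<bar>x n * (\<Sum>i<n. x i)\<bar> \<le> M * (real n * M)"
    unfolding abs_mult using assms[of n] M by (intro mult_mono) auto
  then have rho_part: "\<bar>x n * (\<Sum>i<n. x i)\<bar> \<le> real n * M\<^sup>2"
    by (simp add: power2_eq_square algebra_simps)
  have nonneg: "0 \<le> M\<^sup>2" "0 \<le> \<bar>k / real n\<bar> * (M + \<bar>cb\<bar>)" "0 \<le> real n * M\<^sup>2"
    using M by auto
  show ?thesis
  proof (cases "j < n")
    case True
    have "\<bar>- ((x j)\<^sup>2) + k / real n * (x n - cb)\<bar> \<le> (x j)\<^sup>2 + \<bar>k / real n\<bar> * \<bar>x n - cb\<bar>"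
      by (rule order_trans[OF abs_triangle_ineq]) (simp add: abs_mult)
    also have "\<dots> \<le> M\<^sup>2 + \<bar>k / real n\<bar> * (M + \<bar>cb\<bar>)"
      using x_sq[of j] True assms[of n]
      by (intro add_mono mult_left_mono) (auto intro: order_trans[OF abs_triangle_ineq4])
    finally have "\<bar>- ((x j)\<^sup>2) + k / real n * (x n - cb)\<bar> \<le> M\<^sup>2 + \<bar>k / real n\<bar> * (M + \<bar>cb\<bar>)" .
    moreover have "system_field n k cb x j = - ((x j)\<^sup>2) + k / real n * (x n - cb)"
      using True by (simp add: system_field_def)
    ultimately show ?thesis
      using nonneg by linarith
  next
    case False
    then have "\<bar>system_field n k cb x j\<bar> \<le> \<bar>x n * (\<Sum>i<n. x i)\<bar>"
      by (simp add: system_field_def)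
    with rho_part nonneg show ?thesis by linarith
  qed
qed

lemma system_field_locally_lipschitz:
  "\<exists>L. L-lipschitz_on (cball x0 R) (\<lambda>x. of_coords (system_field n k cb (coord x)))"
proof (rule lipschitz_on_of_coords[where N = n])
  define P where "P = norm x0 + \<bar>R\<bar>"
  have P: "0 \<le> P" by (simp add: P_def)
  have coord_bound: "norm (coord x i) \<le> P" if "x \<in> cball x0 R" for x i
    using that norm_coord_le[of x i] norm_triangle_sub[of x x0]
    by (auto simp: P_def dist_norm norm_minus_commute)
  have square: "(P * 1 + P * 1)-lipschitz_on (cball x0 R) (\<lambda>x. coord x i * coord x i)" for i
    using lipschitz_on_coord coord_bound P by (intro lipschitz_on_mult_bounded) auto
  have sum: "(\<Sum>i<n. 1)-lipschitz_on (cball x0 R) (\<lambda>x. \<Sum>i<n. coord x i)"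
    by (intro lipschitz_on_sum lipschitz_on_coord)
  have "norm (\<Sum>i<n. coord x i) \<le> n * P" if "x \<in> cball x0 R" for x
    using sum_norm_le[of "{..<n}" "coord x" "\<lambda>_. P"] coord_bound[OF that] by simp
  then have product: "(P * (\<Sum>i<n. 1) + n * P * 1)-lipschitz_on (cball x0 R)
      (\<lambda>x. coord x n * (\<Sum>i<n. coord x i))"
    using lipschitz_on_coord coord_bound P sum by (intro lipschitz_on_mult_bounded) auto
  fix j assume "j \<le> n"
  show "\<exists>L. L-lipschitz_on (cball x0 R) (\<lambda>x. system_field n k cb (coord x) j)"
  proof (cases "j < n")
    case True
    then have "(\<lambda>x. system_field n k cb (coord x) j) =
        (\<lambda>x. - (coord x j * coord x j) + k / real n * (coord x n - cb))"
      by (simp add: system_field_def power2_eq_square)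
    then show ?thesis
      by (intro exI[where x = "(P * 1 + P * 1) + \<bar>k / real n\<bar> * (1 + 0)"])
        (simp only: lipschitz_on_add lipschitz_on_minus square lipschitz_on_cmult_real
          lipschitz_on_diff lipschitz_on_coord lipschitz_on_constant)
  next
    case False
    with \<open>j \<le> n\<close> have "(\<lambda>x. system_field n k cb (coord x) j) =
        (\<lambda>x. - (coord x n * (\<Sum>i<n. coord x i)))"
      by (simp add: system_field_def)
    then show ?thesis
      using lipschitz_on_minus[OF product] by metis
  qed
qed (simp add: system_field_def)

lemma system_local_existence:
  fixes y_init :: "nat \<Rightarrow> real" and t_init :: real
  obtains \<delta> y where "0 < \<delta>" and "\<And>j. continuous_on UNIV (y j)"
    and "\<And>j t. j \<le> n \<Longrightarrow> t \<in> {t_init..t_init + \<delta>} \<Longrightarrow>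
       y j t = y_init j + integral {t_init..t} (\<lambda>s. system_field n k cb (\<lambda>i. y i s) j)"
proof -
  define F where "F x = of_coords (system_field n k cb (coord x))" for x
  define X0 where "X0 = of_coords (\<lambda>j. if j \<le> n then y_init j else 0)"
  obtain L where L: "L-lipschitz_on (cball X0 1) F"
    using system_field_locally_lipschitz unfolding F_def by blast
  obtain \<delta> X where "0 < \<delta>" and X_cont: "continuous_on UNIV X" and X_ball: "\<And>t. X t \<in> cball X0 1"
    and X_eq: "\<And>t. t \<in> {t_init..t_init + \<delta>} \<Longrightarrow> X t = X0 + integral {t_init..t} (\<lambda>s. F (X s))"
    using picard_lindeloef_local[OF zero_less_one L] by blast
  define y where "y j t = coord (X t) j" for j t
  have coord_F: "coord (F x) = system_field n k cb (coord x)" for x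
    unfolding F_def by (rule coord_of_coords[where N = n]) (simp add: system_field_def)
  have coord_X0: "coord X0 j = y_init j" if "j \<le> n" for j
    unfolding X0_def using that by (subst coord_of_coords[where N = n]) auto
  have "continuous_on UNIV (\<lambda>s. F (X s))"
    by (rule continuous_on_compose2[OF lipschitz_on_continuous_on[OF L] X_cont]) (use X_ball in auto)
  then have FX_integrable: "(\<lambda>s. F (X s)) integrable_on {t_init..t}" for t
    by (simp add: continuous_on_subset integrable_continuous_interval)
  show ?thesis
  proof (rule that[OF \<open>0 < \<delta>\<close>])
    show "continuous_on UNIV (y j)" for j
      unfolding y_def
      by (rule continuous_on_compose2[OF linear_continuous_on[OF bounded_linear_coord] X_cont]) auto
    fix j t assume "j \<le> n" "t \<in> {t_init..t_init + \<delta>}"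
    then have "y j t = y_init j + coord (integral {t_init..t} (\<lambda>s. F (X s))) j"
      unfolding y_def by (simp only: X_eq coord_X0 linear_add[OF bounded_linear.linear[OF bounded_linear_coord]])
    also have "coord (integral {t_init..t} (\<lambda>s. F (X s))) j = integral {t_init..t} (\<lambda>s. coord (F (X s)) j)"
      using integral_linear[OF FX_integrable bounded_linear_coord, of t j] by (simp add: o_def)
    also have "\<dots> = integral {t_init..t} (\<lambda>s. system_field n k cb (\<lambda>i. y i s) j)"
      by (simp only: coord_F y_def)
    finally show "y j t = y_init j + integral {t_init..t} (\<lambda>s. system_field n k cb (\<lambda>i. y i s) j)" .
  qed
qed

section \<open>Continuation of bounded solutions\<close>

definition solution_state :: "nat \<Rightarrow> (nat \<Rightarrow> real \<Rightarrow> real) \<Rightarrow> (real \<Rightarrow> real) \<Rightarrow> nat \<Rightarrow> real \<Rightarrow> real" where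
  "solution_state n lam rho j = (if j < n then lam j else rho)"

lemma is_solution_iff_solution_state:
  "is_solution n k cb rho0 l0 T lam rho \<longleftrightarrow> 0 < T \<and> rho 0 = rho0 \<and> (\<forall>i<n. lam i 0 = l0 i) \<and>
    (\<forall>j\<le>n. \<forall>t\<in>{0..<T}. (solution_state n lam rho j has_real_derivative
       system_field n k cb (\<lambda>i. solution_state n lam rho i t) j) (at t within {0..<T}))"
proof -
  have field: "system_field n k cb (\<lambda>i. solution_state n lam rho i t) j =
      (if j < n then - ((lam j t)\<^sup>2) + k / real n * (rho t - cb)
       else if j = n then - rho t * (\<Sum>i<n. lam i t) else 0)" for j t
    by (simp add: system_field_def solution_state_def)
  have split_le: "(\<forall>j\<le>n. P j) \<longleftrightarrow> (\<forall>j<n. P j) \<and> P n" for P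
    by (auto simp: le_less)
  show ?thesis
    unfolding is_solution_def split_le field by (simp add: solution_state_def)
qed

lemma glued_solution_has_derivative:
  fixes g y :: "nat \<Rightarrow> real \<Rightarrow> real" and T T' :: real
  defines "h \<equiv> \<lambda>j t. if t < T then g j t else y j t"
  assumes "0 \<le> T" and "T \<le> T'"
    and g_cont: "\<And>j. j \<le> n \<Longrightarrow> continuous_on {0..T} (g j)"
    and g_deriv: "\<And>j t. j \<le> n \<Longrightarrow> t \<in> {0..<T} \<Longrightarrow>
      (g j has_real_derivative system_field n k cb (\<lambda>i. g i t) j) (at t within {0..<T})"
    and y_cont: "\<And>j. j \<le> n \<Longrightarrow> continuous_on {T..T'} (y j)"
    and y_eq: "\<And>j t. j \<le> n \<Longrightarrow> t \<in> {T..T'} \<Longrightarrow>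
      y j t = g j T + integral {T..t} (\<lambda>s. system_field n k cb (\<lambda>i. y i s) j)"
    and "j \<le> n" and "t \<in> {0..<T'}"
  shows "(h j has_real_derivative system_field n k cb (\<lambda>i. h i t) j) (at t within {0..<T'})"
proof -
  have y_T: "y i T = g i T" if "i \<le> n" for i
    using y_eq[OF that, of T] assms(3) by simp
  have h_cont: "continuous_on {0..T'} (\<lambda>s. h i s)" if "i \<le> n" for i
    unfolding h_def using assms(2,3) g_cont[OF that] y_cont[OF that] y_T[OF that]
    by (intro continuous_on_glue) auto
  have G_cont: "continuous_on {0..T'} (\<lambda>s. system_field n k cb (\<lambda>i. h i s) j)"
    by (rule continuous_on_system_field) (rule h_cont)
  show ?thesis
    unfolding h_def
  proof (rule has_real_derivative_glue[OF assms(2,3) g_cont[OF \<open>j \<le> n\<close>] G_cont[unfolded h_def]])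
    fix s assume s: "s \<in> {0..<T}"
    then show "(g j has_real_derivative system_field n k cb (\<lambda>i. if s < T then g i s else y i s) j)
        (at s within {0..<T})"
      using g_deriv[OF \<open>j \<le> n\<close> s] by simp
  next
    fix s assume s: "s \<in> {T..T'}"
    have "integral {T..s} (\<lambda>s. system_field n k cb (\<lambda>i. y i s) j)
        = integral {T..s} (\<lambda>s. system_field n k cb (\<lambda>i. if s < T then g i s else y i s) j)"
      by (rule integral_cong) auto
    then show "y j s = g j T + integral {T..s}
        (\<lambda>s. system_field n k cb (\<lambda>i. if s < T then g i s else y i s) j)"
      using y_eq[OF \<open>j \<le> n\<close> s] by simp
  qed (use assms in auto)
qed

lemma is_solution_of_solution_state:
  assumes "0 < T" and "h n 0 = rho0" and "\<And>i. i < n \<Longrightarrow> h i 0 = l0 i"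
    and "\<And>j t. j \<le> n \<Longrightarrow> t \<in> {0..<T} \<Longrightarrow>
      (h j has_real_derivative system_field n k cb (\<lambda>i. h i t) j) (at t within {0..<T})"
  shows "is_solution n k cb rho0 l0 T h (h n)"
proof -
  have state: "solution_state n h (h n) j = h j" if "j \<le> n" for j
    using that by (auto simp: solution_state_def)
  have field: "system_field n k cb (\<lambda>i. solution_state n h (h n) i t) j = system_field n k cb (\<lambda>i. h i t) j"
    for j t
    by (rule system_field_cong) (simp add: state)
  show ?thesis
    unfolding is_solution_iff_solution_state using assms by (simp add: state field)
qed

lemma bounded_solution_extends_to_closure:
  assumes sol: "is_solution n k cb rho0 l0 T lam rho"
    and rho_bound: "\<And>t. t \<in> {0..<T} \<Longrightarrow> \<bar>rho t\<bar> \<le> M"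
    and lam_bound: "\<And>i t. i < n \<Longrightarrow> t \<in> {0..<T} \<Longrightarrow> \<bar>lam i t\<bar> \<le> M"
  obtains g where "\<And>j. j \<le> n \<Longrightarrow> continuous_on {0..T} (g j)"
    and "\<And>j t. j \<le> n \<Longrightarrow> t \<in> {0..<T} \<Longrightarrow> g j t = solution_state n lam rho j t"
    and "\<And>j t. j \<le> n \<Longrightarrow> t \<in> {0..<T} \<Longrightarrow>
      (g j has_real_derivative system_field n k cb (\<lambda>i. g i t) j) (at t within {0..<T})"
proof -
  let ?u = "solution_state n lam rho"
  have T_pos: "0 < T"
    and u_deriv: "\<And>j t. j \<le> n \<Longrightarrow> t \<in> {0..<T} \<Longrightarrow>
      (?u j has_real_derivative system_field n k cb (\<lambda>i. ?u i t) j) (at t within {0..<T})"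
    using sol by (auto simp: is_solution_iff_solution_state)
  have "\<bar>?u j t\<bar> \<le> M" if "t \<in> {0..<T}" for j t
    using that rho_bound lam_bound by (simp add: solution_state_def)
  then have field_bound: "\<bar>system_field n k cb (\<lambda>i. ?u i t) j\<bar>
      \<le> M\<^sup>2 + \<bar>k / real n\<bar> * (M + \<bar>cb\<bar>) + real n * M\<^sup>2" if "t \<in> {0..<T}" for j t
    using that by (intro system_field_bound)
  have "\<exists>g. continuous_on {0..T} g \<and> (\<forall>t\<in>{0..<T}. g t = ?u j t)" if "j \<le> n" for j
    by (rule continuous_extension_of_bounded_derivative[OF T_pos u_deriv[OF that] field_bound])
  then obtain g where g: "\<And>j. j \<le> n \<Longrightarrow> continuous_on {0..T} (g j) \<and> (\<forall>t\<in>{0..<T}. g j t = ?u j t)"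
    by metis
  moreover have "(g j has_real_derivative system_field n k cb (\<lambda>i. g i t) j) (at t within {0..<T})"
    if "j \<le> n" "t \<in> {0..<T}" for j t
  proof -
    have "system_field n k cb (\<lambda>i. g i t) j = system_field n k cb (\<lambda>i. ?u i t) j"
      using g that(2) by (intro system_field_cong) auto
    then show ?thesis
      using u_deriv[OF that] g that
      by (auto intro: has_field_derivative_transform_within[OF _ zero_less_one])
  qed
  ultimately show ?thesis
    using that by blast
qed

lemma bounded_solution_extends:
  assumes sol: "is_solution n k cb rho0 l0 T lam rho"
    and "\<And>t. t \<in> {0..<T} \<Longrightarrow> \<bar>rho t\<bar> \<le> M"
    and "\<And>i t. i < n \<Longrightarrow> t \<in> {0..<T} \<Longrightarrow> \<bar>lam i t\<bar> \<le> M"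
  obtains T' lam' rho' where "T < T'" and "is_solution n k cb rho0 l0 T' lam' rho'"
    and "\<forall>t\<in>{0..<T}. rho' t = rho t" and "\<forall>i<n. \<forall>t\<in>{0..<T}. lam' i t = lam i t"
proof -
  have T_pos: "0 < T" and initial: "rho 0 = rho0" "\<And>i. i < n \<Longrightarrow> lam i 0 = l0 i"
    using sol by (auto simp: is_solution_def)
  obtain g where g_cont: "\<And>j. j \<le> n \<Longrightarrow> continuous_on {0..T} (g j)"
    and g_eq: "\<And>j t. j \<le> n \<Longrightarrow> t \<in> {0..<T} \<Longrightarrow> g j t = solution_state n lam rho j t"
    and g_deriv: "\<And>j t. j \<le> n \<Longrightarrow> t \<in> {0..<T} \<Longrightarrow>
      (g j has_real_derivative system_field n k cb (\<lambda>i. g i t) j) (at t within {0..<T})"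
    using bounded_solution_extends_to_closure[OF assms] by blast
  obtain \<delta> y where "0 < \<delta>" and y_cont: "\<And>j. continuous_on UNIV (y j)"
    and y_eq: "\<And>j t. j \<le> n \<Longrightarrow> t \<in> {T..T + \<delta>} \<Longrightarrow>
      y j t = g j T + integral {T..t} (\<lambda>s. system_field n k cb (\<lambda>i. y i s) j)"
    using system_local_existence[where y_init = "\<lambda>j. g j T" and t_init = T and n = n and k = k and cb = cb]
    by blast
  define h where "h j t = (if t < T then g j t else y j t)" for j t
  have h_eq: "h j t = solution_state n lam rho j t" if "j \<le> n" "t \<in> {0..<T}" for j t
    using that g_eq by (simp add: h_def)
  show ?thesis
  proof (rule that)
    show "T < T + \<delta>" using \<open>0 < \<delta>\<close> by simp
    show "is_solution n k cb rho0 l0 (T + \<delta>) h (h n)"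
    proof (rule is_solution_of_solution_state)
      fix j t assume "j \<le> n" "t \<in> {0..<T + \<delta>}"
      then show "(h j has_real_derivative system_field n k cb (\<lambda>i. h i t) j) (at t within {0..<T + \<delta>})"
        unfolding h_def
        by (intro glued_solution_has_derivative[OF _ _ g_cont g_deriv continuous_on_subset[OF y_cont] y_eq])
          (use T_pos \<open>0 < \<delta>\<close> in auto)
    qed (use T_pos \<open>0 < \<delta>\<close> h_eq[of _ 0] initial in \<open>auto simp: solution_state_def\<close>)
    show "\<forall>t\<in>{0..<T}. h n t = rho t" "\<forall>i<n. \<forall>t\<in>{0..<T}. h i t = lam i t"
      using h_eq by (auto simp: solution_state_def)
  qed
qed

section \<open>A priori bounds while the integral of \<open>\<rho>\<close> stays bounded\<close>

locale system_solution =
  fixes n :: nat and k cb rho0 T :: real and l0 :: "nat \<Rightarrow> real"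
    and lam :: "nat \<Rightarrow> real \<Rightarrow> real" and rho :: "real \<Rightarrow> real"
  assumes solution: "is_solution n k cb rho0 l0 T lam rho"
    and n_pos: "0 < n" and k_pos: "0 < k" and cb_pos: "0 < cb" and rho0_pos: "0 < rho0"
begin

definition coupling :: real where
  "coupling = k / real n"

lemma coupling_pos: "0 < coupling"
  using k_pos n_pos by (simp add: coupling_def)

lemma T_pos: "0 < T"
  and rho_initial: "rho 0 = rho0"
  and lam_initial: "i < n \<Longrightarrow> lam i 0 = l0 i"
  and lam_deriv: "i < n \<Longrightarrow> t \<in> {0..<T} \<Longrightarrow>
    (lam i has_real_derivative - ((lam i t)\<^sup>2) + coupling * (rho t - cb)) (at t within {0..<T})"
  and rho_deriv: "t \<in> {0..<T} \<Longrightarrow>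
    (rho has_real_derivative - rho t * (\<Sum>i<n. lam i t)) (at t within {0..<T})"
  using solution by (auto simp: is_solution_def coupling_def)

definition rho_int :: "real \<Rightarrow> real" where
  "rho_int t = integral {0..t} rho"

definition lam_int :: "nat \<Rightarrow> real \<Rightarrow> real" where
  "lam_int i t = integral {0..t} (lam i)"

lemma rho_int_0 [simp]: "rho_int 0 = 0" and lam_int_0 [simp]: "lam_int i 0 = 0"
  by (simp_all add: rho_int_def lam_int_def)

lemma rho_int_deriv: "t \<in> {0..<T} \<Longrightarrow> (rho_int has_real_derivative rho t) (at t within {0..<T})"
  unfolding rho_int_def
  by (rule integral_has_real_derivative_atLeastLessThan[OF DERIV_continuous_on[OF rho_deriv]])

lemma lam_int_deriv:
  "i < n \<Longrightarrow> t \<in> {0..<T} \<Longrightarrow> (lam_int i has_real_derivative lam i t) (at t within {0..<T})"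
  unfolding lam_int_def
  by (rule integral_has_real_derivative_atLeastLessThan[OF DERIV_continuous_on[OF lam_deriv]])

lemma exp_lam_int_deriv:
  "i < n \<Longrightarrow> t \<in> {0..<T} \<Longrightarrow>
    ((\<lambda>s. exp (lam_int i s)) has_real_derivative exp (lam_int i t) * lam i t) (at t within {0..<T})"
  by (rule DERIV_chain2[OF DERIV_exp lam_int_deriv])

lemma rho_eq_exp: "t \<in> {0..<T} \<Longrightarrow> rho t = rho0 * exp (- (\<Sum>i<n. lam_int i t))"
proof -
  have "((\<lambda>s. rho s * exp (\<Sum>i<n. lam_int i s)) has_real_derivative 0) (at s within {0..<T})"
    if "s \<in> {0..<T}" for s
  proof -
    have "((\<lambda>s. \<Sum>i<n. lam_int i s) has_real_derivative (\<Sum>i<n. lam i s)) (at s within {0..<T})"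
      using that by (intro DERIV_sum lam_int_deriv) auto
    from DERIV_mult[OF rho_deriv[OF that] DERIV_chain2[OF DERIV_exp this]]
    show ?thesis by (rule DERIV_cong) (simp add: algebra_simps)
  qed
  then have "\<exists>C. \<forall>s\<in>{0..<T}. rho s * exp (\<Sum>i<n. lam_int i s) = C"
    by (intro has_field_derivative_zero_constant) (auto simp: convex_real_interval)
  then obtain C where C: "\<And>s. s \<in> {0..<T} \<Longrightarrow> rho s * exp (\<Sum>i<n. lam_int i s) = C"
    by blast
  have "C = rho0"
    using C[of 0] T_pos rho_initial by simp
  then show "t \<in> {0..<T} \<Longrightarrow> rho t = rho0 * exp (- (\<Sum>i<n. lam_int i t))"
    using C[of t] by (simp add: exp_minus field_simps)
qed

lemma rho_pos: "t \<in> {0..<T} \<Longrightarrow> 0 < rho t"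
  using rho_eq_exp rho0_pos by simp

lemma rho_int_mono: "0 \<le> s \<Longrightarrow> s \<le> t \<Longrightarrow> t < T \<Longrightarrow> rho_int s \<le> rho_int t"
  by (rule nondecreasing_of_deriv_nonneg[OF _ _ rho_int_deriv])
    (auto intro: less_imp_le[OF rho_pos])

lemma lam_le_rho_int:
  assumes "i < n" and "t \<in> {0..<T}"
  shows "lam i t \<le> l0 i + coupling * rho_int t"
proof -
  have "coupling * rho_int 0 - lam i 0 \<le> coupling * rho_int t - lam i t"
  proof (rule nondecreasing_of_deriv_nonneg[where S = "{0..<T}" and a = 0 and b = t
        and f = "\<lambda>s. coupling * rho_int s - lam i s"])
    fix s assume "s \<in> {0..t}"
    with assms show "((\<lambda>s. coupling * rho_int s - lam i s) has_real_derivative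
        coupling * rho s - (- ((lam i s)\<^sup>2) + coupling * (rho s - cb))) (at s within {0..<T})"
      by (intro DERIV_diff DERIV_cmult rho_int_deriv lam_deriv) auto
    have "coupling * rho s - (- ((lam i s)\<^sup>2) + coupling * (rho s - cb))
        = (lam i s)\<^sup>2 + coupling * cb"
      by (simp add: algebra_simps)
    also have "\<dots> \<ge> 0"
      by (intro add_nonneg_nonneg zero_le_power2 less_imp_le[OF mult_pos_pos[OF coupling_pos cb_pos]])
    finally show "0 \<le> coupling * rho s - (- ((lam i s)\<^sup>2) + coupling * (rho s - cb))" .
  qed (use assms in auto)
  then show ?thesis using assms lam_initial by simp
qed

end

locale bounded_rho_int_solution = system_solution +
  fixes Z :: real
  assumes rho_int_le: "\<And>t. t \<in> {0..<T} \<Longrightarrow> rho_int t \<le> Z"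
begin

lemma Z_nonneg: "0 \<le> Z"
  using rho_int_le[of 0] T_pos by simp

definition lam_bound :: real where
  "lam_bound = (\<Sum>i<n. \<bar>l0 i\<bar>) + coupling * Z"

lemma lam_bound_nonneg: "0 \<le> lam_bound"
  unfolding lam_bound_def using coupling_pos Z_nonneg
  by (intro add_nonneg_nonneg sum_nonneg mult_nonneg_nonneg) auto

lemma l0_le_sum_abs: "i < n \<Longrightarrow> \<bar>l0 i\<bar> \<le> (\<Sum>i<n. \<bar>l0 i\<bar>)"
  by (rule member_le_sum) auto

lemma lam_le:
  assumes "i < n" and "t \<in> {0..<T}"
  shows "lam i t \<le> lam_bound"
proof -
  have "lam i t \<le> l0 i + coupling * rho_int t"
    using assms by (rule lam_le_rho_int)
  also have "\<dots> \<le> lam_bound"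
    unfolding lam_bound_def using l0_le_sum_abs[OF assms(1)] rho_int_le[OF assms(2)] coupling_pos
    by (intro add_mono mult_left_mono) auto
  finally show ?thesis .
qed

lemma lam_int_le:
  assumes "i < n" and "t \<in> {0..<T}"
  shows "lam_int i t \<le> lam_bound * T"
proof -
  have "lam_bound * 0 - lam_int i 0 \<le> lam_bound * t - lam_int i t"
  proof (rule nondecreasing_of_deriv_nonneg[where S = "{0..<T}" and a = 0 and b = t
        and f = "\<lambda>s. lam_bound * s - lam_int i s"])
    fix s assume "s \<in> {0..t}"
    with assms show "((\<lambda>s. lam_bound * s - lam_int i s) has_real_derivative lam_bound * 1 - lam i s)
        (at s within {0..<T})"
      by (intro DERIV_diff DERIV_cmult DERIV_ident lam_int_deriv) auto
    show "0 \<le> lam_bound * 1 - lam i s"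
      using lam_le[OF assms(1), of s] \<open>s \<in> {0..t}\<close> assms(2) by simp
  qed (use assms in auto)
  also have "lam_bound * t \<le> lam_bound * T"
    using assms(2) lam_bound_nonneg by (intro mult_left_mono) auto
  finally show ?thesis by simp
qed

definition slope_bound :: real where
  "slope_bound = 1 + (\<Sum>i<n. \<bar>l0 i\<bar>) + exp (lam_bound * T) * coupling * cb * T"

lemma slope_bound_pos: "0 < slope_bound"
  unfolding slope_bound_def using coupling_pos cb_pos T_pos
  by (intro add_pos_nonneg sum_nonneg mult_nonneg_nonneg) auto

lemma exp_lam_int_mult_lam_ge:
  assumes "i < n" and "t \<in> {0..<T}"
  shows "- slope_bound \<le> exp (lam_int i t) * lam i t"
proof -
  define U where "U = exp (lam_bound * T)"
  define c where "c = coupling * cb * U"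
  have "exp (lam_int i 0) * lam i 0 + c * 0 \<le> exp (lam_int i t) * lam i t + c * t"
  proof (rule nondecreasing_of_deriv_nonneg[where S = "{0..<T}" and a = 0 and b = t
        and f = "\<lambda>s. exp (lam_int i s) * lam i s + c * s"])
    fix s assume s: "s \<in> {0..t}"
    then have s': "s \<in> {0..<T}" using assms(2) by auto
    show "((\<lambda>s. exp (lam_int i s) * lam i s + c * s) has_real_derivative
        coupling * (exp (lam_int i s) * rho s) + coupling * cb * (U - exp (lam_int i s)))
        (at s within {0..<T})"
      by (rule DERIV_cong[OF DERIV_add[OF DERIV_mult[OF exp_lam_int_deriv[OF assms(1) s']
            lam_deriv[OF assms(1) s']] DERIV_cmult[OF DERIV_ident]]])
        (simp add: c_def algebra_simps power2_eq_square)
    have "exp (lam_int i s) \<le> U"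
      using lam_int_le[OF assms(1) s'] by (simp add: U_def)
    then show "0 \<le> coupling * (exp (lam_int i s) * rho s) + coupling * cb * (U - exp (lam_int i s))"
      using coupling_pos cb_pos rho_pos[OF s'] by (intro add_nonneg_nonneg mult_nonneg_nonneg) auto
  qed (use assms in auto)
  then have "l0 i - c * t \<le> exp (lam_int i t) * lam i t"
    using lam_initial[OF assms(1)] by simp
  moreover have "c * t \<le> exp (lam_bound * T) * coupling * cb * T"
    using assms(2) coupling_pos cb_pos by (auto simp: c_def U_def intro!: mult_left_mono)
  ultimately show ?thesis
    using l0_le_sum_abs[OF assms(1)] by (simp add: slope_bound_def)
qed

lemma exp_lam_int_plus_linear_mono:
  assumes "i < n" and "0 \<le> s" and "s \<le> t" and "t < T"
  shows "exp (lam_int i s) + slope_bound * s \<le> exp (lam_int i t) + slope_bound * t"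
proof (rule nondecreasing_of_deriv_nonneg[where S = "{0..<T}" and a = s and b = t
      and f = "\<lambda>s. exp (lam_int i s) + slope_bound * s"])
  fix x assume "x \<in> {s..t}"
  with assms show "((\<lambda>s. exp (lam_int i s) + slope_bound * s) has_real_derivative
      exp (lam_int i x) * lam i x + slope_bound * 1) (at x within {0..<T})"
    by (intro DERIV_add DERIV_cmult DERIV_ident exp_lam_int_deriv) auto
  show "0 \<le> exp (lam_int i x) * lam i x + slope_bound * 1"
    using exp_lam_int_mult_lam_ge[OF assms(1), of x] \<open>x \<in> {s..t}\<close> assms by simp
qed (use assms in auto)

definition rho_floor :: real where
  "rho_floor = rho0 * exp (- (real n * (lam_bound * T)))"

lemma rho_floor_pos: "0 < rho_floor"
  using rho0_pos by (simp add: rho_floor_def)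

lemma rho_ge:
  assumes "i < n" and "t \<in> {0..<T}"
  shows "rho_floor * exp (- lam_int i t) \<le> rho t"
proof -
  have "(\<Sum>j<n. lam_int j t) = lam_int i t + (\<Sum>j\<in>{..<n} - {i}. lam_int j t)"
    using assms(1) by (simp add: sum.remove)
  also have "(\<Sum>j\<in>{..<n} - {i}. lam_int j t) \<le> (\<Sum>j\<in>{..<n} - {i}. lam_bound * T)"
    using assms(2) by (intro sum_mono lam_int_le) auto
  also have "\<dots> \<le> (\<Sum>j<n. lam_bound * T)"
    using lam_bound_nonneg T_pos by (intro sum_mono2) auto
  finally have "(\<Sum>j<n. lam_int j t) \<le> lam_int i t + real n * (lam_bound * T)"
    by simp
  then have "rho_floor * exp (- lam_int i t) \<le> rho0 * exp (- (\<Sum>j<n. lam_int j t))"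
    using rho0_pos by (simp add: rho_floor_def flip: exp_add)
  then show ?thesis
    using rho_eq_exp[OF assms(2)] by simp
qed

text \<open>Integrate \<open>\<rho> s \<ge> rho_floor * exp (- lam_int i s) \<ge> rho_floor / (exp (lam_int i t) + slope_bound * (t - s))\<close>
  over \<open>[0, t]\<close>; the second inequality is \<open>exp_lam_int_plus_linear_mono\<close>.\<close>

lemma rho_int_ge_log:
  assumes "i < n" and "t \<in> {0..<T}"
  shows "rho_floor / slope_bound * (ln (exp (lam_int i t) + slope_bound * t) - lam_int i t) \<le> rho_int t"
proof -
  define B where "B = slope_bound"
  define q where "q s = exp (lam_int i t) + B * (t - s)" for s
  define G where "G s = - (rho_floor / B) * ln (q s)" for s
  have B_pos: "0 < B" using slope_bound_pos by (simp add: B_def)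
  have q_pos: "0 < q s" if "s \<le> t" for s
    using that B_pos by (simp add: q_def add_pos_nonneg)
  have "rho_int 0 - G 0 \<le> rho_int t - G t"
  proof (rule nondecreasing_of_deriv_nonneg[where S = "{0..<T}" and a = 0 and b = t
        and f = "\<lambda>s. rho_int s - G s"])
    fix s assume s: "s \<in> {0..t}"
    then have s': "s \<in> {0..<T}" using assms(2) by auto
    have qs: "0 < q s" using s by (intro q_pos) auto
    have dq: "(q has_real_derivative - B) (at s within {0..<T})"
      unfolding q_def by (auto intro!: derivative_eq_intros)
    have "(G has_real_derivative rho_floor / q s) (at s within {0..<T})"
      unfolding G_def
      by (rule DERIV_cong[OF DERIV_cmult[OF DERIV_chain2[OF DERIV_ln[OF qs] dq]]])
        (use B_pos qs in \<open>auto simp: field_simps\<close>)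
    then show "((\<lambda>s. rho_int s - G s) has_real_derivative rho s - rho_floor / q s) (at s within {0..<T})"
      by (rule DERIV_diff[OF rho_int_deriv[OF s']])
    have "exp (lam_int i s) \<le> q s"
      using exp_lam_int_plus_linear_mono[OF assms(1), of s t] s assms(2)
      by (simp add: q_def B_def algebra_simps)
    then have "rho_floor / q s \<le> rho_floor / exp (lam_int i s)"
      using rho_floor_pos qs by (intro divide_left_mono) auto
    also have "\<dots> = rho_floor * exp (- lam_int i s)"
      by (simp add: exp_minus field_simps)
    also have "\<dots> \<le> rho s"
      by (rule rho_ge[OF assms(1) s'])
    finally show "0 \<le> rho s - rho_floor / q s" by simp
  qed (use assms in auto)
  moreover have "G t - G 0 = rho_floor / B * (ln (exp (lam_int i t) + B * t) - lam_int i t)"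
    by (simp add: G_def q_def algebra_simps)
  ultimately show ?thesis by (simp add: B_def)
qed

lemma lam_int_ge:
  assumes "i < n" and "t \<in> {0..<T}"
  shows "- (Z * slope_bound / rho_floor) \<le> lam_int i t"
proof -
  have "1 \<le> exp (lam_int i t) + slope_bound * t"
    using exp_lam_int_plus_linear_mono[OF assms(1), of 0 t] assms(2) by simp
  then have "0 \<le> ln (exp (lam_int i t) + slope_bound * t)"
    by simp
  then have "rho_floor / slope_bound * (- lam_int i t)
      \<le> rho_floor / slope_bound * (ln (exp (lam_int i t) + slope_bound * t) - lam_int i t)"
    using rho_floor_pos slope_bound_pos by (intro mult_left_mono) auto
  also have "\<dots> \<le> Z"
    using rho_int_ge_log[OF assms] rho_int_le[OF assms(2)] by linarith
  finally have "rho_floor / slope_bound * (- lam_int i t) \<le> Z" .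
  then show ?thesis
    using rho_floor_pos slope_bound_pos by (simp add: field_simps)
qed

lemma solution_bounded:
  obtains M where "\<And>t. t \<in> {0..<T} \<Longrightarrow> \<bar>rho t\<bar> \<le> M"
    and "\<And>i t. i < n \<Longrightarrow> t \<in> {0..<T} \<Longrightarrow> \<bar>lam i t\<bar> \<le> M"
proof -
  define W where "W = Z * slope_bound / rho_floor"
  define M where "M = rho0 * exp (real n * W) + lam_bound + slope_bound * exp W"
  have M_summands_nonneg: "0 \<le> rho0 * exp (real n * W)" "0 \<le> lam_bound" "0 \<le> slope_bound * exp W"
    using rho0_pos lam_bound_nonneg slope_bound_pos by auto
  show ?thesis
  proof (rule that)
    fix t assume t: "t \<in> {0..<T}"
    have "- (\<Sum>i<n. lam_int i t) \<le> real n * W"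
      using lam_int_ge[OF _ t] sum_mono[of "{..<n}" "\<lambda>_. - W" "\<lambda>i. lam_int i t"]
      by (simp add: W_def sum_negf)
    then have "rho t \<le> rho0 * exp (real n * W)"
      using rho_eq_exp[OF t] rho0_pos by simp
    then show "\<bar>rho t\<bar> \<le> M"
      using rho_pos[OF t] M_summands_nonneg by (simp add: M_def)
    fix i assume i: "i < n"
    have "- slope_bound * exp (- lam_int i t) \<le> lam i t"
      using exp_lam_int_mult_lam_ge[OF i t] by (simp add: exp_minus field_simps)
    moreover have "slope_bound * exp (- lam_int i t) \<le> slope_bound * exp W"
      using lam_int_ge[OF i t] slope_bound_pos by (simp add: W_def)
    ultimately show "\<bar>lam i t\<bar> \<le> M"
      using lam_le[OF i t] M_summands_nonneg by (simp add: M_def abs_le_iff)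
  qed
qed

end

lemma (in system_solution) filterlim_rho_int_at_top:
  assumes maximal: "\<And>T' lam' rho'. T' > T \<Longrightarrow> is_solution n k cb rho0 l0 T' lam' rho' \<Longrightarrow>
    \<not> ((\<forall>t\<in>{0..<T}. rho' t = rho t) \<and> (\<forall>i<n. \<forall>t\<in>{0..<T}. lam' i t = lam i t))"
  shows "filterlim rho_int at_top (at_left T)"
proof -
  have unbounded: "\<exists>t\<in>{0..<T}. Z < rho_int t" for Z
  proof (rule ccontr)
    assume "\<not> ?thesis"
    then interpret bounded_rho_int_solution n k cb rho0 T l0 lam rho Z
      by unfold_locales (auto simp: not_less)
    obtain M where "\<And>t. t \<in> {0..<T} \<Longrightarrow> \<bar>rho t\<bar> \<le> M"
      and "\<And>i t. i < n \<Longrightarrow> t \<in> {0..<T} \<Longrightarrow> \<bar>lam i t\<bar> \<le> M"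
      using solution_bounded by blast
    then obtain T' lam' rho' where "T < T'" and "is_solution n k cb rho0 l0 T' lam' rho'"
      and "\<forall>t\<in>{0..<T}. rho' t = rho t" and "\<forall>i<n. \<forall>t\<in>{0..<T}. lam' i t = lam i t"
      using bounded_solution_extends[OF solution] by blast
    then show False
      using maximal by blast
  qed
  show ?thesis
    unfolding filterlim_at_top
  proof
    fix Z
    obtain t0 where t0: "t0 \<in> {0..<T}" "Z < rho_int t0"
      using unbounded by blast
    have "eventually (\<lambda>t. t \<in> {t0<..<T}) (at_left T)"
      using t0(1) by (intro eventually_at_left_real) auto
    then show "eventually (\<lambda>t. Z \<le> rho_int t) (at_left T)"
    proof eventually_elim
      case (elim t)
      then have "rho_int t0 \<le> rho_int t"
        using t0(1) by (intro rho_int_mono) auto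
      with t0(2) show ?case by simp
    qed
  qed
qed

theorem proposition2p5:
  fixes n :: nat and k cb rho0 tB :: real and l0 :: "nat \<Rightarrow> real"
    and lam :: "nat \<Rightarrow> real \<Rightarrow> real" and rho :: "real \<Rightarrow> real"
  assumes "n \<ge> 2" and "k > 0" and "cb > 0" and "rho0 > 0"
    and "\<And>i j. i \<le> j \<Longrightarrow> j < n \<Longrightarrow> l0 i \<le> l0 j"
    and "0 < tB"
    and sol: "is_solution n k cb rho0 l0 tB lam rho"
    and maximal: "\<And>T lam' rho'. T > tB \<Longrightarrow> is_solution n k cb rho0 l0 T lam' rho' \<Longrightarrow>
         \<not> ((\<forall>t\<in>{0..<tB}. rho' t = rho t) \<and> (\<forall>i<n. \<forall>t\<in>{0..<tB}. lam' i t = lam i t))"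
  shows "filterlim (\<lambda>t. integral {0..t} rho) at_top (at_left tB)"
proof -
  interpret system_solution n k cb rho0 tB l0 lam rho
    using assms(1-4) sol by unfold_locales auto
  have "filterlim rho_int at_top (at_left tB)"
    using maximal by (rule filterlim_rho_int_at_top)
  then show ?thesis
    by (simp add: rho_int_def[abs_def])
qed

end
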